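(* Let $n\ge2$, let $r_1,\dots,r_{4^{n-1}+1}$ be the vertices of an affine Koch curve at step $n$, and let $w_n=c_1c_2\cdots c_{2\cdot 4^{n-2}-1}$ be its Koch code. Then: (i) for every $k$ with $c_k=1$ the affine curvatures satisfy $\kappa_{2k}=\kappa_{2k+1}=-1$, $\bar\kappa_{2k}=-1$, $\bar\kappa_{2k+1}=1$; for every $k$ with $c_k=0$ they satisfy $\kappa_{2k}=\kappa_{2k+1}=\bar\kappa_{2k}=\bar\kappa_{2k+1}=1$; (ii) $w_2=1$ and $w_{n+1}=w_n\,0\,w_n\,1\,w_n\,0\,w_n$ (concatenation of words) for all $n\ge 2$; in particular $w_3=1011101$, $w_4=1011101\,0\,1011101\,1\,1011101\,0\,1011101$, and $w_n$ has $2\cdot4^{n-2}-1$ letters.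
   Context: Let $R_\theta$ denote counterclockwise rotation of $\mathbb R^2$ by the angle $\theta$. The standard Koch curve at step $n$ is the polygon $K_n$ with vertices $r_1,\dots,r_{4^{n-1}+1}$ defined recursively: $K_1$ has vertices $(0,0),(1,0)$; $K_{n+1}$ is obtained from $K_n$ by replacing each edge from $p$ to $q$, in order, by the four edges through the points $p,\ p+\tfrac13(q-p),\ p+\tfrac13(q-p)+\tfrac13R_{\pi/3}(q-p),\ p+\tfrac23(q-p),\ q$, and numbering the resulting vertices consecutively starting from $(0,0)$. An affine Koch curve at step $n$ is the image of $K_n$ under an invertible affine map of $\mathbb R^2$, with vertices numbered correspondingly. A vertex $r_i$ ($2\le i\le 4^{n-1}$) of $K_n$ is a sharp point if the angle $\angle r_{i-1}r_ir_{i+1}$ equals $\pi/3$. For $n\ge 2$ the Koch code at step $n$ is the word $w_n=c_1\cdots c_{2\cdot4^{n-2}-1}$ over $\{0,1\}$ with $c_k=1$ iff $r_{2k+1}$ is a sharp point of $K_n$ (the same code is used for affine images of $K_n$). Affine curvatures: for a polygon with vertices $r_1,\dots,r_N\in\mathbb R^2$ put $t_k=r_{k+1}-r_k$ and $[a,b]=a_1b_2-a_2b_1$ for $a,b\in\mathbb R^2$. For $2\le k\le N-2$ with $[t_{k-1},t_k]\ne0$ the first and second affine curvatures at $r_k$ are $\kappa_k=\dfrac{[t_k,t_{k+1}]}{[t_{k-1},t_k]}$ and $\bar\kappa_k=\dfrac{[t_{k-1},t_{k+1}]}{[t_{k-1},t_k]}$. *)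

theory Defs
  imports "HOL-Analysis.Analysis"
begin

definition rot :: "real \<Rightarrow> real^2 \<Rightarrow> real^2" where
  "rot \<theta> v = vector [cos \<theta> * v$1 - sin \<theta> * v$2, sin \<theta> * v$1 + cos \<theta> * v$2]"

text \<open>Replacing the edge from p to q by four edges; we list the first four of the
  five points (the endpoint q is contributed by the next edge / the last vertex).\<close>
definition koch_edge :: "real^2 \<Rightarrow> real^2 \<Rightarrow> (real^2) list" where
  "koch_edge p q =
     [p, p + (1/3) *\<^sub>R (q - p),
      p + (1/3) *\<^sub>R (q - p) + (1/3) *\<^sub>R rot (pi/3) (q - p),
      p + (2/3) *\<^sub>R (q - p)]"

fun koch_refine :: "(real^2) list \<Rightarrow> (real^2) list" where
  "koch_refine [] = []"
| "koch_refine [p] = [p]"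
| "koch_refine (p # q # rest) = koch_edge p q @ koch_refine (q # rest)"

text \<open>The list of vertices of the standard Koch curve K_n (n \<ge> 1);
  the list index j corresponds to the vertex r_(j+1).\<close>
definition koch :: "nat \<Rightarrow> (real^2) list" where
  "koch n = (koch_refine ^^ (n - 1)) [vector [0, 0], vector [1, 0]]"

definition kv :: "nat \<Rightarrow> nat \<Rightarrow> real^2" where
  "kv n i = koch n ! (i - 1)"

definition vec_angle :: "real^2 \<Rightarrow> real^2 \<Rightarrow> real" where
  "vec_angle u v = arccos ((u \<bullet> v) / (norm u * norm v))"

definition sharp :: "nat \<Rightarrow> nat \<Rightarrow> bool" where
  "sharp n i \<longleftrightarrow> 2 \<le> i \<and> i \<le> 4^(n-1) \<and>
     vec_angle (kv n (i - 1) - kv n i) (kv n (i + 1) - kv n i) = pi / 3"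

definition koch_code :: "nat \<Rightarrow> nat list" where
  "koch_code n = map (\<lambda>k. if sharp n (2 * k + 1) then 1 else 0) [1..<2 * 4^(n-2)]"

definition brk :: "real^2 \<Rightarrow> real^2 \<Rightarrow> real" where
  "brk a b = a$1 * b$2 - a$2 * b$1"

definition tng :: "(nat \<Rightarrow> real^2) \<Rightarrow> nat \<Rightarrow> real^2" where
  "tng r k = r (k + 1) - r k"

definition kappa :: "(nat \<Rightarrow> real^2) \<Rightarrow> nat \<Rightarrow> real" where
  "kappa r k = brk (tng r k) (tng r (k + 1)) / brk (tng r (k - 1)) (tng r k)"

definition kappa_bar :: "(nat \<Rightarrow> real^2) \<Rightarrow> nat \<Rightarrow> real" where
  "kappa_bar r k = brk (tng r (k - 1)) (tng r (k + 1)) / brk (tng r (k - 1)) (tng r k)"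

end

theory Submission
  imports Defs
begin

text \<open>Every edge of \<open>K\<^sub>n\<close> has length \<open>3\<^sup>1\<^sup>-\<^sup>n\<close> and a direction that is a multiple of \<open>\<pi>/3\<close>.
  Passing from edge \<open>j\<close> to edge \<open>j+1\<close> the direction turns by \<open>\<pi>/3\<close> if \<open>j\<close> is odd, by \<open>-2\<pi>/3\<close>
  if \<open>j \<equiv> 2 (mod 4)\<close>, and otherwise as it does between edges \<open>j/4\<close> and \<open>j/4+1\<close> one step earlier.
  The affine curvatures are ratios of brackets of edges, hence affine invariant, and for
  equilateral polygons they are ratios of sines of the turning angles; at \<open>r\<^sub>2\<^sub>k\<close> and \<open>r\<^sub>2\<^sub>k\<^sub>+\<^sub>1\<close> the
  turns are \<open>(1, T)\<close> and \<open>(T, 1)\<close> with \<open>T \<in> {1, -2}\<close>, and \<open>T = -2\<close> exactly when \<open>r\<^sub>2\<^sub>k\<^sub>+\<^sub>1\<close> is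
  sharp. The recursion for the Koch code is the self-similarity
  \<open>turn (4\<^sup>p q + j) = turn j\<close> (\<open>0 < j < 4\<^sup>p\<close>) of the turn sequence.\<close>

subsection \<open>The turn sequence\<close>

text \<open>\<open>turn j\<close> is the turn, in multiples of \<open>\<pi>/3\<close>, from the \<open>j\<close>-th to the \<open>(j+1)\<close>-th edge of
  every \<open>K\<^sub>n\<close>, and \<open>heading i\<close> the direction of the \<open>(i+1)\<close>-th edge.\<close>

fun turn :: "nat \<Rightarrow> int" where
  "turn j = (if j = 0 then 0 else if odd j then 1 else if j mod 4 = 2 then -2 else turn (j div 4))"

declare turn.simps [simp del]

fun heading :: "nat \<Rightarrow> int" where
  "heading 0 = 0"
| "heading (Suc i) = heading i + turn (Suc i)"

lemma turn_0 [simp]: "turn 0 = 0"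
  by (simp add: turn.simps)

lemma turn_odd: "odd j \<Longrightarrow> turn j = 1"
  by (subst turn.simps) (simp add: odd_pos)

lemma turn_mod_4_eq_2: "j mod 4 = 2 \<Longrightarrow> turn j = -2"
  by (subst turn.simps) presburger

lemma turn_mult_4 [simp]: "turn (4 * j) = turn j"
  by (subst turn.simps) simp

lemma turn_cases: "0 < j \<Longrightarrow> turn j = 1 \<or> turn j = -2"
proof (induction j rule: less_induct)
  case (less j)
  show ?case
  proof (cases "odd j \<or> j mod 4 = 2")
    case True
    then show ?thesis using turn_odd turn_mod_4_eq_2 by blast
  next
    case False
    then have "4 dvd j" by presburger
    then obtain i where j: "j = 4 * i" by blast
    with less.prems have "0 < i" "i < j" by auto
    then show ?thesis using less.IH by (simp add: j)
  qed
qed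

lemma turn_pow4_mult: "turn (4 ^ p * q) = turn q"
  by (induction p) (simp_all add: mult.assoc)

lemma turn_pow4_mult_add: "0 < j \<Longrightarrow> j < 4 ^ p \<Longrightarrow> turn (4 ^ p * q + j) = turn j"
proof (induction p arbitrary: j)
  case (Suc p)
  have same_mod: "(4 ^ Suc p * q + j) mod 4 = j mod 4" "odd (4 ^ Suc p * q + j) \<longleftrightarrow> odd j"
    by (simp_all add: mod_add_left_eq[symmetric])
  show ?case
  proof (cases "odd j \<or> j mod 4 = 2")
    case True
    then show ?thesis using same_mod turn_odd turn_mod_4_eq_2 by metis
  next
    case False
    then have "4 dvd j" by presburger
    then obtain i where j: "j = 4 * i" by blast
    with Suc.prems have "0 < i" "i < 4 ^ p" by auto
    have "turn (4 ^ Suc p * q + j) = turn (4 * (4 ^ p * q + i))" by (simp add: j algebra_simps)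
    also have "\<dots> = turn i" using Suc.IH \<open>0 < i\<close> \<open>i < 4 ^ p\<close> by (simp only: turn_mult_4)
    finally show ?thesis by (simp add: j)
  qed
qed simp

lemma turn_add_turn_Suc: "0 < j \<Longrightarrow> turn j + turn (Suc j) \<in> {2, -1}"
proof (cases "odd j")
  case True
  then show ?thesis using turn_cases[of "Suc j"] turn_odd[of j] by auto
next
  case False
  then have "odd (Suc j)" by simp
  then show "0 < j \<Longrightarrow> ?thesis" using turn_cases[of j] turn_odd[of "Suc j"] by auto
qed

lemma heading_1_2_3: "heading 1 = 1" "heading 2 = -1" "heading 3 = 0"
proof -
  have "turn 1 = 1" "turn 2 = -2" "turn 3 = 1" by (simp_all add: turn_odd turn_mod_4_eq_2)
  moreover have "heading 1 = heading 0 + turn 1" "heading 2 = heading 1 + turn 2"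
    "heading 3 = heading 2 + turn 3"
    by (simp_all only: One_nat_def numeral_2_eq_2 numeral_3_eq_3 heading.simps(2))
  ultimately show "heading 1 = 1" "heading 2 = -1" "heading 3 = 0"
    using heading.simps(1) by linarith+
qed

lemma heading_pow4_mult_add: "b < 4 ^ p \<Longrightarrow> heading (4 ^ p * q + b) = heading (4 ^ p * q) + heading b"
proof (induction b)
  case (Suc b)
  have "heading (4 ^ p * q + Suc b) = heading (4 ^ p * q + b) + turn (4 ^ p * q + Suc b)" by simp
  also have "turn (4 ^ p * q + Suc b) = turn (Suc b)"
    using Suc.prems by (intro turn_pow4_mult_add) simp_all
  finally show ?case using Suc by simp
qed simp

lemma heading_mult_4: "heading (4 * a) = heading a"
proof (induction a)
  case (Suc a)
  have "4 * Suc a = Suc (4 * a + 3)" by simp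
  then have "heading (4 * Suc a) = heading (4 * a + 3) + turn (4 * Suc a)"
    by (simp only: heading.simps(2))
  also have "heading (4 * a + 3) = heading a"
    using heading_pow4_mult_add[of 3 1 a] Suc.IH by (simp add: heading_1_2_3)
  also have "turn (4 * Suc a) = turn (Suc a)" by (rule turn_mult_4)
  finally show ?case by (simp only: heading.simps(2))
qed simp

lemma heading_mult_4_add: "b < 4 \<Longrightarrow> heading (4 * a + b) = heading a + heading b"
  using heading_pow4_mult_add[of b 1 a] by (simp add: heading_mult_4)

lemma heading_diff: "0 < j \<Longrightarrow> heading j - heading (j - 1) = turn j"
  by (cases j) simp_all

lemma heading_angle_diff:
  "0 < j \<Longrightarrow> of_int (heading j) * pi / 3 - of_int (heading (j - 1)) * pi / 3 = of_int (turn j) * pi / 3"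
  using heading_diff[of j] by (simp add: diff_divide_distrib[symmetric] left_diff_distrib[symmetric])

definition unit_vec :: "real \<Rightarrow> real^2" where
  "unit_vec \<theta> = vector [cos \<theta>, sin \<theta>]"

lemma unit_vec_nth [simp]: "unit_vec \<theta> $ 1 = cos \<theta>" "unit_vec \<theta> $ 2 = sin \<theta>"
  by (simp_all add: unit_vec_def)

lemma rot_nth [simp]:
  "rot \<theta> v $ 1 = cos \<theta> * v $ 1 - sin \<theta> * v $ 2" "rot \<theta> v $ 2 = sin \<theta> * v $ 1 + cos \<theta> * v $ 2"
  by (simp_all add: rot_def)

lemma vec2_eq_iff: "x = y \<longleftrightarrow> x $ 1 = y $ 1 \<and> x $ 2 = y $ 2" for x y :: "real^2"
  by (simp add: vec_eq_iff forall_2)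

lemma rot_0 [simp]: "rot 0 v = v"
  by (simp add: vec2_eq_iff)

lemma rot_scaleR: "rot \<theta> (c *\<^sub>R v) = c *\<^sub>R rot \<theta> v"
  by (simp add: vec2_eq_iff algebra_simps)

lemma rot_unit_vec: "rot \<theta> (unit_vec \<phi>) = unit_vec (\<phi> + \<theta>)"
  by (simp add: vec2_eq_iff cos_add sin_add algebra_simps)

lemma diff_rot_pi_third: "v - rot (pi / 3) v = rot (- (pi / 3)) v"
  by (simp add: vec2_eq_iff sin_60 cos_60 algebra_simps)

lemma norm_unit_vec [simp]: "norm (unit_vec \<theta>) = 1"
  by (simp add: norm_eq_sqrt_inner inner_vec_def sum_2)

lemma sin_int_mult_pi_third:
  "t \<in> {-2, -1, 1, 2} \<Longrightarrow> sin (of_int t * pi / 3) = of_int (sgn t) * (sqrt 3 / 2)"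
proof -
  have neg: "sin (of_int (- t) * pi / 3) = - sin (of_int t * pi / 3)" for t :: int
  proof -
    have "of_int (- t) * pi / 3 = - (of_int t * pi / 3)" by simp
    then show ?thesis by (simp only: sin_minus)
  qed
  assume "t \<in> {-2, -1, 1, 2}"
  then show ?thesis using neg[of 1] neg[of 2] sin_60 sin_120 by auto
qed

lemma cos_int_mult_pi_third: "t \<in> {-2, 1} \<Longrightarrow> cos (of_int t * pi / 3) = of_int (sgn t) / 2"
proof -
  assume "t \<in> {-2, 1}"
  then consider "t = -2" | "t = 1" by blast
  then show ?thesis
  proof cases
    case 1
    then have "of_int t * pi / 3 = - (2 * pi / 3)" by simp
    then have "cos (of_int t * pi / 3) = cos (2 * pi / 3)" by (simp only: cos_minus)
    then show ?thesis using 1 cos_120 by simp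
  qed (simp add: cos_60)
qed

lemma arccos_half: "arccos (1/2) = pi / 3" and arccos_minus_half: "arccos (- (1/2)) = 2 * pi / 3"
  using arccos_cos[of "pi / 3"] arccos_cos[of "2 * pi / 3"] by (simp_all add: cos_60 cos_120)

lemma vec_angle_unit_vec:
  assumes "0 < c"
  shows "vec_angle (- (c *\<^sub>R unit_vec \<alpha>)) (c *\<^sub>R unit_vec \<beta>) = arccos (- cos (\<beta> - \<alpha>))"
proof -
  have "(- (c *\<^sub>R unit_vec \<alpha>)) \<bullet> (c *\<^sub>R unit_vec \<beta>) = - (c * c * cos (\<beta> - \<alpha>))"
    by (simp add: inner_vec_def sum_2 cos_diff algebra_simps)
  with assms show ?thesis by (simp add: vec_angle_def)
qed

lemma brk_scaleR_unit_vec: "brk (c *\<^sub>R unit_vec \<alpha>) (c *\<^sub>R unit_vec \<beta>) = c\<^sup>2 * sin (\<beta> - \<alpha>)"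
  by (simp add: brk_def sin_diff power2_eq_square algebra_simps)

lemma brk_matrix_vector_mult: "brk (A *v x) (A *v y) = det A * brk x y"
  by (simp add: brk_def det_2 matrix_vector_mult_def sum_2 algebra_simps)

subsection \<open>The edges of the Koch curve\<close>

lemma length_koch_edge [simp]: "length (koch_edge p q) = 4"
  by (simp add: koch_edge_def)

lemma nth_koch_refine_0: "koch_refine (q # rest) ! 0 = q"
  by (cases rest) (simp_all add: koch_edge_def)

lemma length_koch_refine: "xs \<noteq> [] \<Longrightarrow> length (koch_refine xs) = 4 * (length xs - 1) + 1"
  by (induction xs rule: koch_refine.induct) (auto simp: koch_edge_def)

lemma nth_koch_refine:
  "Suc a < length xs \<Longrightarrow> b \<le> 4 \<Longrightarrow>
    koch_refine xs ! (4 * a + b) = (koch_edge (xs ! a) (xs ! Suc a) @ [xs ! Suc a]) ! b"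
proof (induction xs arbitrary: a rule: koch_refine.induct)
  case (3 p q rest)
  show ?case
  proof (cases a)
    case 0
    have "koch_refine (p # q # rest) ! b = (koch_edge p q @ koch_refine (q # rest)) ! b" by simp
    with 0 3(3) show ?thesis
      by (cases "b = 4") (auto simp: nth_append nth_koch_refine_0)
  next
    case (Suc a')
    then have "koch_refine (p # q # rest) ! (4 * a + b) = koch_refine (q # rest) ! (4 * a' + b)"
      by (simp add: nth_append koch_edge_def)
    with 3 Suc show ?thesis by simp
  qed
qed auto

text \<open>The four new edges point in the directions \<open>0, \<pi>/3, -\<pi>/3, 0\<close> relative to the old one,
  which are \<open>heading 0, \<dots>, heading 3\<close> times \<open>\<pi>/3\<close>.\<close>

lemma koch_edge_step:
  "b < 4 \<Longrightarrow> (koch_edge p q @ [q]) ! Suc b - (koch_edge p q @ [q]) ! b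
    = (1/3) *\<^sub>R rot (of_int (heading b) * pi / 3) (q - p)"
proof -
  assume "b < 4"
  then consider "b = 0" | "b = 1" | "b = 2" | "b = 3" by linarith
  then show ?thesis
  proof cases
    case 1
    then show ?thesis by (simp add: koch_edge_def algebra_simps)
  next
    case 2
    then show ?thesis unfolding 2 heading_1_2_3 by (simp add: koch_edge_def)
  next
    case 3
    have "(p + (2/3) *\<^sub>R (q - p)) - (p + (1/3) *\<^sub>R (q - p) + (1/3) *\<^sub>R rot (pi/3) (q - p))
        = (1/3) *\<^sub>R (q - p - rot (pi / 3) (q - p))"
      by (simp add: vec2_eq_iff algebra_simps)
    then show ?thesis unfolding 3 heading_1_2_3 by (simp add: koch_edge_def diff_rot_pi_third)
  next
    case 4
    then show ?thesis unfolding 4 heading_1_2_3 by (simp add: koch_edge_def vec2_eq_iff algebra_simps)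
  qed
qed

lemma koch_refine_step:
  assumes "Suc a < length xs" and "b < 4"
  shows "koch_refine xs ! Suc (4 * a + b) - koch_refine xs ! (4 * a + b)
    = (1/3) *\<^sub>R rot (of_int (heading b) * pi / 3) (xs ! Suc a - xs ! a)"
proof -
  have "koch_refine xs ! Suc (4 * a + b) = koch_refine xs ! (4 * a + Suc b)" by simp
  then show ?thesis
    using nth_koch_refine[OF assms(1), of b] nth_koch_refine[OF assms(1), of "Suc b"]
      koch_edge_step[OF assms(2)] assms(2) by simp
qed

lemma koch_refine_equilateral:
  assumes len: "length xs = 4 ^ p + 1"
    and edges: "\<And>i. i < 4 ^ p \<Longrightarrow> xs ! Suc i - xs ! i = c *\<^sub>R unit_vec (of_int (heading i) * pi / 3)"
  shows "length (koch_refine xs) = 4 ^ Suc p + 1"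
    and "i < 4 ^ Suc p \<Longrightarrow> koch_refine xs ! Suc i - koch_refine xs ! i
          = (c / 3) *\<^sub>R unit_vec (of_int (heading i) * pi / 3)"
proof -
  show "length (koch_refine xs) = 4 ^ Suc p + 1"
    using len length_koch_refine[of xs] by (cases "xs = []") auto
  assume i: "i < 4 ^ Suc p"
  define a b where "a = i div 4" and "b = i mod 4"
  have i_eq: "i = 4 * a + b" and "b < 4" by (simp_all add: a_def b_def)
  have "a < 4 ^ p" using i by (simp add: a_def less_mult_imp_div_less)
  then have "koch_refine xs ! Suc i - koch_refine xs ! i
      = (c / 3) *\<^sub>R rot (of_int (heading b) * pi / 3) (unit_vec (of_int (heading a) * pi / 3))"
    using koch_refine_step[of a xs b] edges[of a] len \<open>b < 4\<close> by (simp add: i_eq rot_scaleR)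
  also have "\<dots> = (c / 3) *\<^sub>R unit_vec (of_int (heading i) * pi / 3)"
    using heading_mult_4_add[OF \<open>b < 4\<close>, of a]
    by (simp add: i_eq rot_unit_vec add_divide_distrib distrib_right)
  finally show "koch_refine xs ! Suc i - koch_refine xs ! i
      = (c / 3) *\<^sub>R unit_vec (of_int (heading i) * pi / 3)" .
qed

lemma funpow_koch_refine_equilateral:
  "length ((koch_refine ^^ p) [vector [0, 0], vector [1, 0]]) = 4 ^ p + 1 \<and>
    (\<forall>i < 4 ^ p. (koch_refine ^^ p) [vector [0, 0], vector [1, 0]] ! Suc i
        - (koch_refine ^^ p) [vector [0, 0], vector [1, 0]] ! i
      = (1/3) ^ p *\<^sub>R unit_vec (of_int (heading i) * pi / 3))"
proof (induction p)
  case 0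
  then show ?case by (simp add: vec2_eq_iff unit_vec_def)
next
  case (Suc p)
  then show ?case
    using koch_refine_equilateral[of "(koch_refine ^^ p) [vector [0, 0], vector [1, 0]]" p "(1/3) ^ p"]
    by simp
qed

lemma tng_koch:
  "1 \<le> k \<Longrightarrow> k \<le> 4 ^ (n - 1) \<Longrightarrow>
    tng (kv n) k = (1/3) ^ (n - 1) *\<^sub>R unit_vec (of_int (heading (k - 1)) * pi / 3)"
  using funpow_koch_refine_equilateral[of "n - 1"]
  by (cases k) (auto simp: tng_def kv_def koch_def)

subsection \<open>Affine curvatures\<close>

lemma tng_affine: "tng (\<lambda>i. A *v r i + b) k = A *v tng r k"
  by (simp add: tng_def matrix_vector_mult_diff_distrib)

lemma kappa_affine: "det A \<noteq> 0 \<Longrightarrow> kappa (\<lambda>i. A *v r i + b) k = kappa r k"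
  by (simp add: kappa_def tng_affine brk_matrix_vector_mult)

lemma kappa_bar_affine: "det A \<noteq> 0 \<Longrightarrow> kappa_bar (\<lambda>i. A *v r i + b) k = kappa_bar r k"
  by (simp add: kappa_bar_def tng_affine brk_matrix_vector_mult)

lemma curvatures_equilateral:
  assumes "c \<noteq> 0" and "\<And>j. j \<in> {k - 1, k, k + 1} \<Longrightarrow> tng r j = c *\<^sub>R unit_vec (\<theta> j)"
  shows "brk (tng r (k - 1)) (tng r k) = c\<^sup>2 * sin (\<theta> k - \<theta> (k - 1))"
    and "kappa r k = sin (\<theta> (k + 1) - \<theta> k) / sin (\<theta> k - \<theta> (k - 1))"
    and "kappa_bar r k = sin (\<theta> (k + 1) - \<theta> (k - 1)) / sin (\<theta> k - \<theta> (k - 1))"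
  using assms by (simp_all add: kappa_def kappa_bar_def brk_scaleR_unit_vec)

lemma koch_curvatures:
  assumes "2 \<le> k" and "k + 1 \<le> 4 ^ (n - 1)"
  shows "brk (tng (kv n) (k - 1)) (tng (kv n) k) \<noteq> 0"
    and "kappa (kv n) k = of_int (sgn (turn k) * sgn (turn (k - 1)))"
    and "kappa_bar (kv n) k = of_int (sgn (turn (k - 1) + turn k) * sgn (turn (k - 1)))"
proof -
  define \<theta> where "\<theta> j = of_int (heading (j - 1)) * pi / 3" for j
  have edges: "tng (kv n) j = (1/3) ^ (n - 1) *\<^sub>R unit_vec (\<theta> j)" if "j \<in> {k - 1, k, k + 1}" for j
    using that assms tng_koch[of j n] by (auto simp: \<theta>_def)
  have turns: "\<theta> k - \<theta> (k - 1) = of_int (turn (k - 1)) * pi / 3"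
    "\<theta> (k + 1) - \<theta> k = of_int (turn k) * pi / 3"
    "\<theta> (k + 1) - \<theta> (k - 1) = of_int (turn (k - 1) + turn k) * pi / 3"
    using heading_angle_diff[of "k - 1"] heading_angle_diff[of k] assms
    by (auto simp: \<theta>_def algebra_simps add_divide_distrib)
  have "turn (k - 1) \<in> {-2, -1, 1, 2}" "turn k \<in> {-2, -1, 1, 2}"
    "turn (k - 1) + turn k \<in> {-2, -1, 1, 2}"
    using turn_cases[of "k - 1"] turn_cases[of k] turn_add_turn_Suc[of "k - 1"] assms by auto
  then have sines: "sin (of_int (turn (k - 1)) * pi / 3) = of_int (sgn (turn (k - 1))) * (sqrt 3 / 2)"
    "sin (of_int (turn k) * pi / 3) = of_int (sgn (turn k)) * (sqrt 3 / 2)"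
    "sin (of_int (turn (k - 1) + turn k) * pi / 3) = of_int (sgn (turn (k - 1) + turn k)) * (sqrt 3 / 2)"
    using sin_int_mult_pi_third by blast+
  have "turn (k - 1) \<noteq> 0" using turn_cases[of "k - 1"] assms by auto
  then have "sgn (turn (k - 1)) \<in> {-1, 1}" by (auto simp: sgn_if)
  then show "brk (tng (kv n) (k - 1)) (tng (kv n) k) \<noteq> 0"
    and "kappa (kv n) k = of_int (sgn (turn k) * sgn (turn (k - 1)))"
    and "kappa_bar (kv n) k = of_int (sgn (turn (k - 1) + turn k) * sgn (turn (k - 1)))"
    using curvatures_equilateral[of "(1/3) ^ (n - 1)" k "kv n" \<theta>] edges
    unfolding turns sines by auto
qed

lemma affine_koch_curvatures:
  assumes "invertible A" and "2 \<le> k" and "k + 1 \<le> 4 ^ (n - 1)"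
    and r: "r = (\<lambda>i. A *v kv n i + b)"
  shows "brk (tng r (k - 1)) (tng r k) \<noteq> 0"
    and "kappa r k = of_int (sgn (turn k) * sgn (turn (k - 1)))"
    and "kappa_bar r k = of_int (sgn (turn (k - 1) + turn k) * sgn (turn (k - 1)))"
proof -
  have "det A \<noteq> 0" using assms(1) by (simp add: invertible_det_nz)
  then show "brk (tng r (k - 1)) (tng r k) \<noteq> 0"
    and "kappa r k = of_int (sgn (turn k) * sgn (turn (k - 1)))"
    and "kappa_bar r k = of_int (sgn (turn (k - 1) + turn k) * sgn (turn (k - 1)))"
    using koch_curvatures[OF assms(2,3)] unfolding r
    by (simp_all add: kappa_affine kappa_bar_affine tng_affine brk_matrix_vector_mult)
qed

lemma affine_koch_curvatures_at_even:
  assumes "invertible A" and "1 \<le> k" and "2 * k + 2 \<le> 4 ^ (n - 1)"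
    and r: "r = (\<lambda>i. A *v kv n i + b)"
  defines "T \<equiv> turn (2 * k)"
  shows "brk (tng r (2 * k - 1)) (tng r (2 * k)) \<noteq> 0 \<and> brk (tng r (2 * k)) (tng r (2 * k + 1)) \<noteq> 0 \<and>
    kappa r (2 * k) = of_int (sgn T) \<and> kappa r (2 * k + 1) = of_int (sgn T) \<and>
    kappa_bar r (2 * k) = of_int (sgn (T + 1)) \<and> kappa_bar r (2 * k + 1) = of_int (sgn (T + 1) * sgn T)"
proof -
  have "odd (2 * k - 1)" using assms(2) by presburger
  then have "turn (2 * k - 1) = 1" "turn (2 * k + 1) = 1" by (simp_all add: turn_odd)
  then show ?thesis
    using affine_koch_curvatures[OF assms(1) _ _ r, of "2 * k"]
      affine_koch_curvatures[OF assms(1) _ _ r, of "2 * k + 1"] assms(2,3)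
    by (simp add: T_def add.commute)
qed

subsection \<open>Sharp points and the Koch code\<close>

lemma sharp_iff_turn: "sharp n i \<longleftrightarrow> 2 \<le> i \<and> i \<le> 4 ^ (n - 1) \<and> turn (i - 1) = -2"
proof -
  have "vec_angle (kv n (i - 1) - kv n i) (kv n (i + 1) - kv n i) = pi / 3 \<longleftrightarrow> turn (i - 1) = -2"
    if i: "2 \<le> i" "i \<le> 4 ^ (n - 1)"
  proof -
    define c :: real where "c = (1/3) ^ (n - 1)"
    have "tng (kv n) (i - 1) = c *\<^sub>R unit_vec (of_int (heading (i - 1 - 1)) * pi / 3)"
      "tng (kv n) i = c *\<^sub>R unit_vec (of_int (heading (i - 1)) * pi / 3)"
      using i by (simp_all add: tng_koch c_def)
    moreover have "kv n (i - 1) - kv n i = - tng (kv n) (i - 1)" "kv n (i + 1) - kv n i = tng (kv n) i"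
      using i by (simp_all add: tng_def)
    ultimately have edges:
      "kv n (i - 1) - kv n i = - (c *\<^sub>R unit_vec (of_int (heading (i - 1 - 1)) * pi / 3))"
      "kv n (i + 1) - kv n i = c *\<^sub>R unit_vec (of_int (heading (i - 1)) * pi / 3)"
      by simp_all
    have "vec_angle (kv n (i - 1) - kv n i) (kv n (i + 1) - kv n i)
        = arccos (- cos (of_int (heading (i - 1)) * pi / 3 - of_int (heading (i - 1 - 1)) * pi / 3))"
      unfolding edges by (rule vec_angle_unit_vec) (simp add: c_def)
    also have "\<dots> = arccos (- cos (of_int (turn (i - 1)) * pi / 3))"
      using heading_angle_diff[of "i - 1"] i by (simp only: zero_less_diff)
    moreover have turn: "turn (i - 1) \<in> {-2, 1}" using turn_cases[of "i - 1"] i by auto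
    ultimately have "vec_angle (kv n (i - 1) - kv n i) (kv n (i + 1) - kv n i)
        = arccos (- (of_int (sgn (turn (i - 1))) / 2))"
      by (simp only: cos_int_mult_pi_third)
    with turn pi_gt_zero show ?thesis by (auto simp: arccos_half arccos_minus_half)
  qed
  then show ?thesis by (auto simp: sharp_def)
qed

definition koch_letter :: "nat \<Rightarrow> nat" where
  "koch_letter k = (if turn (2 * k) = -2 then 1 else 0)"

lemma pow4_minus_1: "2 \<le> m \<Longrightarrow> (4::nat) ^ (m - 1) = 4 * 4 ^ (m - 2)"
proof -
  assume "2 \<le> m"
  then have "m - 1 = Suc (m - 2)" by simp
  then show ?thesis by simp
qed

lemma koch_code_eq_map_letter: "2 \<le> m \<Longrightarrow> koch_code m = map koch_letter [1..<2 * 4 ^ (m - 2)]"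
  unfolding koch_code_def koch_letter_def
proof (rule map_cong)
  fix k assume "2 \<le> m" and "k \<in> set [1..<2 * 4 ^ (m - 2)]"
  then have "2 \<le> 2 * k + 1" "2 * k + 1 \<le> 4 ^ (m - 1)" using pow4_minus_1 by auto
  then show "(if sharp m (2 * k + 1) then 1 else 0) = (if turn (2 * k) = -2 then 1 else 0)"
    by (simp add: sharp_iff_turn)
qed simp

lemma length_koch_code: "length (koch_code m) = 2 * 4 ^ (m - 2) - 1"
  by (simp add: koch_code_def)

lemma koch_code_2: "koch_code 2 = [1]"
  using koch_code_eq_map_letter[of 2] turn_mod_4_eq_2[of 2] by (simp add: koch_letter_def upt_rec)

lemma map_upt_shift: "map f [q + 1..<q + M] = map (\<lambda>i. f (q + i)) [1..<M]"
  by (induction M) auto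

lemma koch_letters_periodic:
  assumes "2 * M = 4 ^ p"
  shows "map koch_letter [q * M + 1..<q * M + M] = map koch_letter [1..<M]"
  unfolding map_upt_shift
proof (rule map_cong)
  fix i assume "i \<in> set [1..<M]"
  then have "0 < 2 * i" "2 * i < 4 ^ p" using assms by auto
  moreover have "2 * (q * M + i) = 4 ^ p * q + 2 * i" using assms by (simp add: algebra_simps)
  ultimately show "koch_letter (q * M + i) = koch_letter i"
    unfolding koch_letter_def by (simp only: turn_pow4_mult_add)
qed simp

lemma upt_split: "a \<le> b \<Longrightarrow> b < c \<Longrightarrow> [a..<c] = [a..<b] @ b # [Suc b..<c]"
  using upt_add_eq_append[of a b "c - b"] upt_conv_Cons[of b c] by simp

lemma koch_letters_Suc_block:
  assumes "2 * M = 4 ^ p" and "0 < q"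
  shows "map koch_letter [1..<Suc q * M] = map koch_letter [1..<q * M] @ koch_letter (q * M) # map koch_letter [1..<M]"
proof -
  have "0 < M" using assms(1) by (metis gr0I mult_0_right power_not_zero zero_neq_numeral)
  then have "[1..<Suc q * M] = [1..<q * M] @ q * M # [q * M + 1..<q * M + M]"
    using upt_split[of 1 "q * M" "Suc q * M"] assms(2) by (simp add: add.commute)
  then show ?thesis using koch_letters_periodic[OF assms(1), of q] by simp
qed

lemma koch_code_Suc:
  assumes "2 \<le> m"
  shows "koch_code (m + 1) = koch_code m @ [0] @ koch_code m @ [1] @ koch_code m @ [0] @ koch_code m"
proof -
  define M :: nat where "M = 2 * 4 ^ (m - 2)"
  have M: "2 * M = 4 ^ (m - 1)" using pow4_minus_1[OF assms] by (simp add: M_def)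
  have code: "koch_code m = map koch_letter [1..<M]"
    using koch_code_eq_map_letter[OF assms] by (simp add: M_def)
  have letter: "koch_letter (q * M) = (if turn q = -2 then 1 else 0)" for q
  proof -
    have "2 * (q * M) = 4 ^ (m - 1) * q" using M by (metis mult.left_commute mult.commute)
    then show ?thesis unfolding koch_letter_def by (simp only: turn_pow4_mult)
  qed
  moreover have "turn 1 = 1" "turn 2 = -2" "turn 3 = 1" by (simp_all add: turn_odd turn_mod_4_eq_2)
  ultimately have "koch_letter M = 0" "koch_letter (2 * M) = 1" "koch_letter (3 * M) = 0"
    using letter[of 1] by simp_all
  moreover have "koch_code (m + 1) = map koch_letter [1..<Suc 3 * M]"
    using koch_code_eq_map_letter[of "m + 1"] pow4_minus_1[OF assms] assms by (simp add: M_def)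

  ultimately show ?thesis
    unfolding code using koch_letters_Suc_block[OF M, of 3] koch_letters_Suc_block[OF M, of 2]
      koch_letters_Suc_block[OF M, of 1] by (simp add: numeral_eq_Suc)
qed

theorem mainTheorem2:
  fixes n :: nat and A :: "real^2^2" and b :: "real^2"
  assumes "n \<ge> 2" and "invertible A"
  defines "r \<equiv> (\<lambda>i. A *v kv n i + b)"
  shows
    "(\<forall>k. 1 \<le> k \<and> k \<le> 2 * 4^(n-2) - 1 \<and> koch_code n ! (k - 1) = 1 \<longrightarrow>
        brk (tng r (2*k - 1)) (tng r (2*k)) \<noteq> 0 \<and> brk (tng r (2*k)) (tng r (2*k + 1)) \<noteq> 0 \<and>
        kappa r (2*k) = -1 \<and> kappa r (2*k + 1) = -1 \<and>
        kappa_bar r (2*k) = -1 \<and> kappa_bar r (2*k + 1) = 1)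
   \<and> (\<forall>k. 1 \<le> k \<and> k \<le> 2 * 4^(n-2) - 1 \<and> koch_code n ! (k - 1) = 0 \<longrightarrow>
        brk (tng r (2*k - 1)) (tng r (2*k)) \<noteq> 0 \<and> brk (tng r (2*k)) (tng r (2*k + 1)) \<noteq> 0 \<and>
        kappa r (2*k) = 1 \<and> kappa r (2*k + 1) = 1 \<and>
        kappa_bar r (2*k) = 1 \<and> kappa_bar r (2*k + 1) = 1)
   \<and> koch_code 2 = [1]
   \<and> (\<forall>m\<ge>2. koch_code (m + 1) =
        koch_code m @ [0] @ koch_code m @ [1] @ koch_code m @ [0] @ koch_code m)
   \<and> koch_code 3 = [1,0,1,1,1,0,1]
   \<and> koch_code 4 = [1,0,1,1,1,0,1] @ [0] @ [1,0,1,1,1,0,1] @ [1] @ [1,0,1,1,1,0,1] @ [0] @ [1,0,1,1,1,0,1]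
   \<and> (\<forall>m\<ge>2. length (koch_code m) = 2 * 4^(m-2) - 1)"
proof -
  have bound: "1 \<le> k \<Longrightarrow> k \<le> 2 * 4 ^ (n - 2) - 1 \<Longrightarrow> 2 * k + 2 \<le> 4 ^ (n - 1)" for k :: nat
    using pow4_minus_1[OF assms(1)] by simp
  have letter: "1 \<le> k \<Longrightarrow> k \<le> 2 * 4 ^ (n - 2) - 1 \<Longrightarrow> koch_code n ! (k - 1) = koch_letter k" for k
    by (simp add: koch_code_eq_map_letter[OF assms(1)])
  have turn_code: "1 \<le> k \<Longrightarrow> k \<le> 2 * 4 ^ (n - 2) - 1 \<Longrightarrow>
      turn (2 * k) = (if koch_code n ! (k - 1) = 1 then -2 else 1) \<and> koch_code n ! (k - 1) \<in> {0, 1}" for k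
    using letter[of k] turn_cases[of "2 * k"] by (auto simp: koch_letter_def)
  note curvatures = affine_koch_curvatures_at_even[OF assms(2) _ bound r_def[THEN meta_eq_to_obj_eq]]
  have code_3: "koch_code 3 = [1,0,1,1,1,0,1]"
    using koch_code_Suc[of 2] koch_code_2 by simp
  moreover have "koch_code 4 = koch_code 3 @ [0] @ koch_code 3 @ [1] @ koch_code 3 @ [0] @ koch_code 3"
    using koch_code_Suc[of 3] by simp
  ultimately show ?thesis
    using curvatures turn_code koch_code_2 koch_code_Suc length_koch_code by auto
qed

end
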